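(* Let $S\subseteq\mathbb{N}^{\mathbb{N}}$ and let $n>0$ be an integer. Then $S$ is $\mathbf{\Sigma}^0_n$ (respectively $\mathbf{\Pi}^0_n$, $\mathbf{\Delta}^0_n$) if and only if there is a $\Sigma_n$ (respectively $\Pi_n$, $\Delta_n$) sentence $\phi$ of $\mathscr{L}_{\max}$ with $S=\{f\in\mathbb{N}^{\mathbb{N}}:\mathscr{M}_f\models\phi\}$.
   Context: Baire space $\mathbb{N}^{\mathbb{N}}$ carries the product of discrete topologies; $\mathbf{\Sigma}^0_n,\mathbf{\Pi}^0_n,\mathbf{\Delta}^0_n$ are the boldface Borel pointclasses. The language $\mathscr{L}_{\max}$ is the first-order language (with equality) having: a constant symbol $\overline{n}$ for each $n\in\mathbb{N}$; an $n$-ary function symbol $\tilde w$ for each $w:\mathbb{N}^n\to\mathbb{N}$; an $n$-ary predicate symbol $\tilde p$ for each $p\subseteq\mathbb{N}^n$; a special unary function symbol $\mathbf{f}$; and, for every $n$ and every $G:\mathbb{N}^n\times\mathbb{N}^{<\mathbb{N}}\to\mathbb{N}$, an $(n+1)$-ary function symbol $G\circ\mathbf{f}$. For $f\in\mathbb{N}^{\mathbb{N}}$, $\mathscr{M}_f$ is the structure with universe $\mathbb{N}$ interpreting $\overline n$ as $n$, $\tilde w$ as $w$, $\tilde p$ as $p$, $\mathbf f$ as $f$, and $G\circ\mathbf f$ as $(m_1,\dots,m_n,m)\mapsto G(m_1,\dots,m_n,f(0),\dots,f(m))$. Formula classes: "quantifier-free" means containing no quantifiers at all (not even bounded ones). $\Sigma_0=\Pi_0=\Delta_0$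 is the set of quantifier-free formulas; $\Sigma_{n+1}=\{\exists x\,\phi:\phi\in\Pi_n\}$ and $\Pi_{n+1}=\{\forall x\,\phi:\phi\in\Sigma_n\}$; a formula is $\Delta_{n+1}$ if it is equivalent, in every structure $\mathscr{M}_f$ ($f\in\mathbb{N}^{\mathbb{N}}$), to some $\Sigma_{n+1}$ formula of $\mathscr{L}_{\max}$ and also to some $\Pi_{n+1}$ formula of $\mathscr{L}_{\max}$. *)

theory Defs
  imports "HOL-Analysis.Analysis"
begin

text \<open>Baire space is nat \<Rightarrow> nat with the product topology (library instance of
the function space topology; nat carries its discrete metric topology).
Only indices n > 0 are meaningful; bSigma 0 is set to the empty class.\<close>

fun bSigma :: "nat \<Rightarrow> (nat \<Rightarrow> nat) set set" where
  "bSigma 0 = {}"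
| "bSigma (Suc 0) = {S. open S}"
| "bSigma (Suc (Suc n)) =
     {S. \<exists>A :: nat \<Rightarrow> (nat \<Rightarrow> nat) set. (\<forall>i. - A i \<in> bSigma (Suc n)) \<and> S = (\<Union>i. A i)}"

definition bPi :: "nat \<Rightarrow> (nat \<Rightarrow> nat) set set" where
  "bPi n = {S. - S \<in> bSigma n}"

definition bDelta :: "nat \<Rightarrow> (nat \<Rightarrow> nat) set set" where
  "bDelta n = bSigma n \<inter> bPi n"

text \<open>An n-ary function symbol w : N^n \<rightarrow> N is given by a function on
argument lists; similarly predicate symbols p \<subseteq> N^n are sets of argument lists,
and the symbols G o f take G : N^n \<times> N^{<N} \<rightarrow> N as a function of the list of
the first n arguments and a finite sequence.\<close>

datatype trm =
    Var nat
  | Cst nat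
  | Fn "nat list \<Rightarrow> nat" "trm list"
  | FF trm
  | GF "nat list \<Rightarrow> nat list \<Rightarrow> nat" "trm list" trm

datatype fm =
    Eq trm trm
  | Pr "nat list set" "trm list"
  | Neg fm
  | Conj fm fm
  | Disj fm fm
  | Imp fm fm
  | FEx nat fm
  | FAll nat fm

fun teval :: "(nat \<Rightarrow> nat) \<Rightarrow> (nat \<Rightarrow> nat) \<Rightarrow> trm \<Rightarrow> nat" where
  "teval f e (Var x) = e x"
| "teval f e (Cst n) = n"
| "teval f e (Fn w ts) = w (map (teval f e) ts)"
| "teval f e (FF t) = f (teval f e t)"
| "teval f e (GF G ts t) = G (map (teval f e) ts) (map f [0..<Suc (teval f e t)])"

fun sat :: "(nat \<Rightarrow> nat) \<Rightarrow> (nat \<Rightarrow> nat) \<Rightarrow> fm \<Rightarrow> bool" where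
  "sat f e (Eq s t) = (teval f e s = teval f e t)"
| "sat f e (Pr p ts) = (map (teval f e) ts \<in> p)"
| "sat f e (Neg \<phi>) = (\<not> sat f e \<phi>)"
| "sat f e (Conj \<phi> \<psi>) = (sat f e \<phi> \<and> sat f e \<psi>)"
| "sat f e (Disj \<phi> \<psi>) = (sat f e \<phi> \<or> sat f e \<psi>)"
| "sat f e (Imp \<phi> \<psi>) = (sat f e \<phi> \<longrightarrow> sat f e \<psi>)"
| "sat f e (FEx x \<phi>) = (\<exists>n. sat f (e(x := n)) \<phi>)"
| "sat f e (FAll x \<phi>) = (\<forall>n. sat f (e(x := n)) \<phi>)"

fun tvars :: "trm \<Rightarrow> nat set" where
  "tvars (Var x) = {x}"
| "tvars (Cst n) = {}"
| "tvars (Fn w ts) = \<Union> (set (map tvars ts))"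
| "tvars (FF t) = tvars t"
| "tvars (GF G ts t) = \<Union> (set (map tvars ts)) \<union> tvars t"

fun freevars :: "fm \<Rightarrow> nat set" where
  "freevars (Eq s t) = tvars s \<union> tvars t"
| "freevars (Pr p ts) = \<Union> (set (map tvars ts))"
| "freevars (Neg \<phi>) = freevars \<phi>"
| "freevars (Conj \<phi> \<psi>) = freevars \<phi> \<union> freevars \<psi>"
| "freevars (Disj \<phi> \<psi>) = freevars \<phi> \<union> freevars \<psi>"
| "freevars (Imp \<phi> \<psi>) = freevars \<phi> \<union> freevars \<psi>"
| "freevars (FEx x \<phi>) = freevars \<phi> - {x}"
| "freevars (FAll x \<phi>) = freevars \<phi> - {x}"

definition sentence :: "fm \<Rightarrow> bool" where
  "sentence \<phi> = (freevars \<phi> = {})"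

text \<open>M_f \<Turnstile> \<phi> (for sentences the assignment is irrelevant).\<close>
definition models :: "(nat \<Rightarrow> nat) \<Rightarrow> fm \<Rightarrow> bool" where
  "models f \<phi> = (\<forall>e. sat f e \<phi>)"

fun qfree :: "fm \<Rightarrow> bool" where
  "qfree (Eq s t) = True"
| "qfree (Pr p ts) = True"
| "qfree (Neg \<phi>) = qfree \<phi>"
| "qfree (Conj \<phi> \<psi>) = (qfree \<phi> \<and> qfree \<psi>)"
| "qfree (Disj \<phi> \<psi>) = (qfree \<phi> \<and> qfree \<psi>)"
| "qfree (Imp \<phi> \<psi>) = (qfree \<phi> \<and> qfree \<psi>)"
| "qfree (FEx x \<phi>) = False"
| "qfree (FAll x \<phi>) = False"

fun isSigma :: "nat \<Rightarrow> fm \<Rightarrow> bool" and isPi :: "nat \<Rightarrow> fm \<Rightarrow> bool" where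
  "isSigma 0 \<phi> = qfree \<phi>"
| "isPi 0 \<phi> = qfree \<phi>"
| "isSigma (Suc n) \<phi> = (\<exists>x \<psi>. \<phi> = FEx x \<psi> \<and> isPi n \<psi>)"
| "isPi (Suc n) \<phi> = (\<exists>x \<psi>. \<phi> = FAll x \<psi> \<and> isSigma n \<psi>)"

definition equivalent :: "fm \<Rightarrow> fm \<Rightarrow> bool" where
  "equivalent \<phi> \<psi> = (\<forall>f e. sat f e \<phi> = sat f e \<psi>)"

fun isDelta :: "nat \<Rightarrow> fm \<Rightarrow> bool" where
  "isDelta 0 \<phi> = qfree \<phi>"
| "isDelta (Suc n) \<phi> =
     ((\<exists>\<psi>. isSigma (Suc n) \<psi> \<and> equivalent \<phi> \<psi>) \<and> (\<exists>\<psi>. isPi (Suc n) \<psi> \<and> equivalent \<phi> \<psi>))"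

end

theory Submission
  imports Defs
begin

text \<open>
  (Formula sets are Borel.)  A term of the language only inspects a finite prefix of f, so
  a quantifier-free formula holds on a clopen set of f; an existential quantifier is a
  countable union and a universal quantifier a countable intersection.  Hence the set of
  f satisfying a \<Sigma>_n (\<Pi>_n) formula lies in the boldface class \<Sigma>^0_n (\<Pi>^0_n).

  (Borel sets are definable.)  We prove the stronger statement that every family of sets
  A(x_0,...,x_{d-1}) with members in \<Sigma>^0_n (\<Pi>^0_n) is defined, uniformly in the parameters,
  by one \<Sigma>_n (\<Pi>_n) formula whose free variables are among x_0,...,x_{d-1}.  An open set is
  the union of the cylinders it contains, and "the prefix f(0),...,f(k) determines a cylinder
  inside A(xs)" is a single atomic formula built from a symbol G \<circ> f; this gives level 1.
  At higher levels the countably many pieces of A(xs) form a family with one more parameter,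
  which is defined by the induction hypothesis and then quantified.  Taking d = 0 yields
  sentences; the \<Delta> case combines the \<Sigma> and \<Pi> cases.
\<close>

section \<open>Open sets of Baire space\<close>

lemma open_Baire_iff:
  fixes U :: "(nat \<Rightarrow> nat) set"
  shows "open U \<longleftrightarrow> (\<forall>f\<in>U. \<exists>N. \<forall>g. (\<forall>i<N. g i = f i) \<longrightarrow> g \<in> U)"
proof
  assume "open U"
  hence U: "openin (product_topology (\<lambda>_. euclidean) UNIV) U" by (simp add: open_fun_def)
  show "\<forall>f\<in>U. \<exists>N. \<forall>g. (\<forall>i<N. g i = f i) \<longrightarrow> g \<in> U"
  proof
    fix f assume "f \<in> U"
    then obtain X where fin: "finite {i. X i \<noteq> UNIV}" and f: "f \<in> Pi\<^sub>E UNIV X"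
      and sub: "Pi\<^sub>E UNIV X \<subseteq> U"
      using U unfolding openin_product_topology_alt by auto
    obtain N where N: "\<And>i. X i \<noteq> UNIV \<Longrightarrow> i < N"
      using fin finite_nat_set_iff_bounded by auto
    show "\<exists>N. \<forall>g. (\<forall>i<N. g i = f i) \<longrightarrow> g \<in> U"
    proof (intro exI[of _ N] allI impI)
      fix g assume g: "\<forall>i<N. g i = f i"
      have "g i \<in> X i" for i
        using g f N[of i] by (cases "X i = UNIV") (auto simp: PiE_def Pi_def)
      hence "g \<in> Pi\<^sub>E UNIV X" by (simp add: PiE_def Pi_def)
      thus "g \<in> U" using sub by (rule subsetD[rotated])
    qed
  qed
next
  assume cyl: "\<forall>f\<in>U. \<exists>N. \<forall>g. (\<forall>i<N. g i = f i) \<longrightarrow> g \<in> U"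
  show "open U" unfolding open_fun_def openin_product_topology_alt
  proof
    fix f assume "f \<in> U"
    then obtain N where N: "\<forall>g. (\<forall>i<N. g i = f i) \<longrightarrow> g \<in> U" using cyl by blast
    define X where "X i = (if i < N then {f i} else UNIV)" for i :: nat
    have "finite {i. X i \<noteq> UNIV}"
      by (rule finite_subset[of _ "{..<N}"]) (auto simp: X_def)
    moreover have "Pi\<^sub>E UNIV X \<subseteq> U"
      using N by (auto simp: X_def PiE_def Pi_def)
    ultimately show "\<exists>X. finite {i \<in> UNIV. X i \<noteq> topspace euclidean} \<and>
        (\<forall>i\<in>UNIV. openin euclidean (X i)) \<and> f \<in> Pi\<^sub>E UNIV X \<and> Pi\<^sub>E UNIV X \<subseteq> U"
      by (intro exI[of _ X]) (auto simp: X_def open_discrete)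
  qed
qed

lemma open_as_cylinder_union:
  fixes U :: "(nat \<Rightarrow> nat) set"
  assumes "open U"
  shows "U = (\<Union>k. {f. \<forall>g. map g [0..<Suc k] = map f [0..<Suc k] \<longrightarrow> g \<in> U})"
proof
  show "U \<subseteq> (\<Union>k. {f. \<forall>g. map g [0..<Suc k] = map f [0..<Suc k] \<longrightarrow> g \<in> U})"
  proof
    fix f assume "f \<in> U"
    then obtain N where N: "\<forall>g. (\<forall>i<N. g i = f i) \<longrightarrow> g \<in> U"
      using assms unfolding open_Baire_iff by blast
    have "g \<in> U" if "map g [0..<Suc N] = map f [0..<Suc N]" for g
    proof -
      from that have "\<forall>i<N. g i = f i" by (simp del: upt_Suc)
      thus ?thesis using N by blast
    qed
    thus "f \<in> (\<Union>k. {f. \<forall>g. map g [0..<Suc k] = map f [0..<Suc k] \<longrightarrow> g \<in> U})" by blast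
  qed
qed blast

section \<open>Functions determined by finite prefixes\<close>

text \<open>A function on Baire space is prefix-determined if its value at f only depends on
  some finite prefix of f (i.e.\ it is locally constant, continuous into a discrete space).\<close>

definition prefix_determined :: "((nat \<Rightarrow> nat) \<Rightarrow> 'a) \<Rightarrow> bool" where
  "prefix_determined F \<longleftrightarrow> (\<forall>f. \<exists>N. \<forall>g. (\<forall>i<N. g i = f i) \<longrightarrow> F g = F f)"

lemma prefix_determined_const: "prefix_determined (\<lambda>f. c)"
  by (auto simp: prefix_determined_def)

lemma prefix_determined_comp:
  "prefix_determined F \<Longrightarrow> prefix_determined (\<lambda>f. h (F f))"
  unfolding prefix_determined_def by metis

lemma prefix_determined_binop:
  assumes "prefix_determined F" and "prefix_determined G"
  shows "prefix_determined (\<lambda>f. h (F f) (G f))"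
  unfolding prefix_determined_def
proof
  fix f
  obtain N M where N: "\<forall>g. (\<forall>i<N. g i = f i) \<longrightarrow> F g = F f"
    and M: "\<forall>g. (\<forall>i<M. g i = f i) \<longrightarrow> G g = G f"
    using assms unfolding prefix_determined_def by meson
  show "\<exists>K. \<forall>g. (\<forall>i<K. g i = f i) \<longrightarrow> h (F g) (G g) = h (F f) (G f)"
  proof (intro exI[of _ "max N M"] allI impI)
    fix g assume "\<forall>i<max N M. g i = f i"
    hence "\<forall>i<N. g i = f i" "\<forall>i<M. g i = f i" by simp_all
    hence "F g = F f" "G g = G f" using N M by blast+
    thus "h (F g) (G g) = h (F f) (G f)" by simp
  qed
qed

lemma prefix_determined_map:
  "(\<And>x. x \<in> set xs \<Longrightarrow> prefix_determined (F x)) \<Longrightarrow> prefix_determined (\<lambda>f. map (\<lambda>x. F x f) xs)"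
proof (induction xs)
  case Nil thus ?case by (simp add: prefix_determined_const)
next
  case (Cons x xs)
  thus ?case using prefix_determined_binop[of "F x" "\<lambda>f. map (\<lambda>x. F x f) xs" "(#)"] by simp
qed

lemma prefix_determined_prefix:
  assumes "prefix_determined F"
  shows "prefix_determined (\<lambda>f. map f [0..<Suc (F f)])"
  unfolding prefix_determined_def
proof
  fix f
  obtain N where N: "\<forall>g. (\<forall>i<N. g i = f i) \<longrightarrow> F g = F f"
    using assms unfolding prefix_determined_def by blast
  show "\<exists>K. \<forall>g. (\<forall>i<K. g i = f i) \<longrightarrow> map g [0..<Suc (F g)] = map f [0..<Suc (F f)]"
  proof (intro exI[of _ "max N (Suc (F f))"] allI impI)
    fix g assume g: "\<forall>i<max N (Suc (F f)). g i = f i"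
    hence "\<forall>i<N. g i = f i" and prefix: "\<forall>i<Suc (F f). g i = f i" by simp_all
    hence "F g = F f" using N by blast
    moreover have "map g [0..<Suc (F f)] = map f [0..<Suc (F f)]"
      using prefix by (simp del: upt_Suc)
    ultimately show "map g [0..<Suc (F g)] = map f [0..<Suc (F f)]" by simp
  qed
qed

lemma prefix_determined_open:
  assumes "prefix_determined P"
  shows "open {f. P f}"
  unfolding open_Baire_iff
proof
  fix f assume f: "f \<in> {f. P f}"
  obtain N where N: "\<forall>g. (\<forall>i<N. g i = f i) \<longrightarrow> P g = P f"
    using assms unfolding prefix_determined_def by blast
  show "\<exists>N. \<forall>g. (\<forall>i<N. g i = f i) \<longrightarrow> g \<in> {f. P f}"
    using f N by blast
qed

text \<open>The value of a term, and the truth of a quantifier-free formula, in the structure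
  M_f only depend on a finite prefix of f: the symbols f and G \<circ> f read f at positions
  given by the (inductively prefix-determined) values of their arguments.\<close>

lemma teval_prefix_determined: "prefix_determined (\<lambda>f. teval f e t)"
proof (induction t)
  case (Fn w ts)
  have "prefix_determined (\<lambda>f. map (\<lambda>t. teval f e t) ts)"
    by (intro prefix_determined_map Fn.IH)
  from prefix_determined_comp[OF this, of w] show ?case by simp
next
  case (FF t)
  from prefix_determined_comp[OF prefix_determined_prefix[OF FF.IH], of last] show ?case by simp
next
  case (GF G ts t)
  have "prefix_determined (\<lambda>f. map (\<lambda>t. teval f e t) ts)"
    by (intro prefix_determined_map GF.IH(1))
  from prefix_determined_binop[OF this prefix_determined_prefix[OF GF.IH(2)], of G]
  show ?case by (simp del: upt_Suc)
qed (simp_all add: prefix_determined_const)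

lemma qfree_prefix_determined: "qfree \<phi> \<Longrightarrow> prefix_determined (\<lambda>f. sat f e \<phi>)"
proof (induction \<phi>)
  case (Eq s t)
  show ?case
    using prefix_determined_binop[OF teval_prefix_determined teval_prefix_determined, of "(=)"] by simp
next
  case (Pr p ts)
  have "prefix_determined (\<lambda>f. map (\<lambda>t. teval f e t) ts)"
    by (intro prefix_determined_map teval_prefix_determined)
  from prefix_determined_comp[OF this, of "\<lambda>xs. xs \<in> p"] show ?case by simp
next
  case (Neg \<phi>) thus ?case using prefix_determined_comp[of _ Not] by simp
next
  case (Conj \<phi> \<psi>) thus ?case using prefix_determined_binop[of _ _ "(\<and>)"] by simp
next
  case (Disj \<phi> \<psi>) thus ?case using prefix_determined_binop[of _ _ "(\<or>)"] by simp
next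
  case (Imp \<phi> \<psi>) thus ?case using prefix_determined_binop[of _ _ "(\<longrightarrow>)"] by simp
qed simp_all

lemma teval_coincidence:
  "(\<And>x. x \<in> tvars t \<Longrightarrow> e x = e' x) \<Longrightarrow> teval f e t = teval f e' t"
proof (induction t)
  case (Fn w ts)
  hence "map (teval f e) ts = map (teval f e') ts" by auto
  thus ?case by (simp only: teval.simps)
next
  case (GF G ts t)
  hence "map (teval f e) ts = map (teval f e') ts" "teval f e t = teval f e' t" by auto
  thus ?case by (simp only: teval.simps)
qed simp_all

lemma sat_coincidence:
  "(\<And>x. x \<in> freevars \<phi> \<Longrightarrow> e x = e' x) \<Longrightarrow> sat f e \<phi> = sat f e' \<phi>"
proof (induction \<phi> arbitrary: e e')
  case (Eq s t) thus ?case using teval_coincidence[of s e e'] teval_coincidence[of t e e'] by simp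
next
  case (Pr p ts)
  hence "map (teval f e) ts = map (teval f e') ts"
    by (auto intro!: map_cong teval_coincidence)
  thus ?case by (simp only: sat.simps)
next
  case (FEx x \<phi>)
  have "sat f (e(x := k)) \<phi> = sat f (e'(x := k)) \<phi>" for k
    by (rule FEx.IH) (use FEx.prems in auto)
  thus ?case by simp
next
  case (FAll x \<phi>)
  have "sat f (e(x := k)) \<phi> = sat f (e'(x := k)) \<phi>" for k
    by (rule FAll.IH) (use FAll.prems in auto)
  thus ?case by simp
next
  case (Neg \<phi>) show ?case using Neg.IH[of e e'] Neg.prems by simp
next
  case (Conj \<phi> \<psi>) show ?case using Conj.IH[of e e'] Conj.prems by simp
next
  case (Disj \<phi> \<psi>) show ?case using Disj.IH[of e e'] Disj.prems by simp
next
  case (Imp \<phi> \<psi>) show ?case using Imp.IH[of e e'] Imp.prems by simp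
qed

lemma models_sentence: "sentence \<phi> \<Longrightarrow> {f. models f \<phi>} = {f. sat f e \<phi>}"
  unfolding models_def sentence_def using sat_coincidence[of \<phi>] by blast

section \<open>Sets defined by formulas are Borel\<close>

lemma bSigma_SucSuc_iff:
  "S \<in> bSigma (Suc (Suc n)) \<longleftrightarrow> (\<exists>B. (\<forall>i::nat. B i \<in> bPi (Suc n)) \<and> S = (\<Union>i. B i))"
  by (simp add: bPi_def)

lemma bPi_SucSuc_iff:
  "S \<in> bPi (Suc (Suc n)) \<longleftrightarrow> (\<exists>C. (\<forall>i::nat. C i \<in> bSigma (Suc n)) \<and> S = (\<Inter>i. C i))"
proof
  assume "S \<in> bPi (Suc (Suc n))"
  then obtain B :: "nat \<Rightarrow> _" where B: "\<forall>i. - B i \<in> bSigma (Suc n)" "- S = (\<Union>i. B i)"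
    by (auto simp: bPi_def)
  hence "S = (\<Inter>i. - B i)" by (metis Compl_UN double_compl)
  with B(1) show "\<exists>C. (\<forall>i::nat. C i \<in> bSigma (Suc n)) \<and> S = (\<Inter>i. C i)"
    by (intro exI[of _ "\<lambda>i. - B i"]) simp
next
  assume "\<exists>C. (\<forall>i::nat. C i \<in> bSigma (Suc n)) \<and> S = (\<Inter>i. C i)"
  then obtain C :: "nat \<Rightarrow> _" where "\<forall>i. C i \<in> bSigma (Suc n)" "S = (\<Inter>i. C i)" by blast
  hence "\<forall>i. - (- C i) \<in> bSigma (Suc n)" "- S = (\<Union>i. - C i)" by auto
  thus "S \<in> bPi (Suc (Suc n))"
    unfolding bPi_def bSigma.simps mem_Collect_eq by (intro exI[of _ "\<lambda>i. - C i"]) simp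
qed

text \<open>Level 1: a quantifier-free formula defines a clopen set for each value of the quantified
  variable, so \<exists>x. \<psi> defines an open set and \<forall>x. \<psi> a closed one.\<close>

lemma level_one_formula_sets:
  assumes "qfree \<psi>"
  shows "{f. sat f e (FEx x \<psi>)} \<in> bSigma (Suc 0)" and "{f. sat f e (FAll x \<psi>)} \<in> bPi (Suc 0)"
proof -
  have "open {f. sat f e' \<psi>}" "open {f. \<not> sat f e' \<psi>}" for e'
    using prefix_determined_open[OF qfree_prefix_determined[OF assms]]
      prefix_determined_open[OF prefix_determined_comp[OF qfree_prefix_determined[OF assms]]] by auto
  moreover have "{f. sat f e (FEx x \<psi>)} = (\<Union>k. {f. sat f (e(x := k)) \<psi>})"
    and "- {f. sat f e (FAll x \<psi>)} = (\<Union>k. {f. \<not> sat f (e(x := k)) \<psi>})" by auto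
  ultimately show "{f. sat f e (FEx x \<psi>)} \<in> bSigma (Suc 0)" and "{f. sat f e (FAll x \<psi>)} \<in> bPi (Suc 0)"
    by (auto simp: bPi_def)
qed

lemma formula_sets_Borel:
  "(isSigma (Suc n) \<phi> \<longrightarrow> {f. sat f e \<phi>} \<in> bSigma (Suc n))
   \<and> (isPi (Suc n) \<phi> \<longrightarrow> {f. sat f e \<phi>} \<in> bPi (Suc n))"
proof (induction n arbitrary: \<phi> e)
  case 0
  show ?case using level_one_formula_sets by auto
next
  case (Suc n)
  show ?case
  proof (intro conjI impI)
    assume "isSigma (Suc (Suc n)) \<phi>"
    then obtain x \<psi> where "\<phi> = FEx x \<psi>" "isPi (Suc n) \<psi>" by auto
    moreover have "{f. sat f e (FEx x \<psi>)} = (\<Union>k. {f. sat f (e(x := k)) \<psi>})" by auto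
    ultimately show "{f. sat f e \<phi>} \<in> bSigma (Suc (Suc n))"
      using Suc.IH unfolding bSigma_SucSuc_iff by metis
  next
    assume "isPi (Suc (Suc n)) \<phi>"
    then obtain x \<psi> where "\<phi> = FAll x \<psi>" "isSigma (Suc n) \<psi>" by auto
    moreover have "{f. sat f e (FAll x \<psi>)} = (\<Inter>k. {f. sat f (e(x := k)) \<psi>})" by auto
    ultimately show "{f. sat f e \<phi>} \<in> bPi (Suc (Suc n))"
      using Suc.IH unfolding bPi_SucSuc_iff by metis
  qed
qed

section \<open>Borel families are definable\<close>

definition defines_family :: "nat \<Rightarrow> fm \<Rightarrow> (nat list \<Rightarrow> (nat \<Rightarrow> nat) set) \<Rightarrow> bool" where
  "defines_family d \<phi> A \<longleftrightarrow>
     freevars \<phi> \<subseteq> {..<d} \<and> (\<forall>f e. sat f e \<phi> \<longleftrightarrow> f \<in> A (map e [0..<d]))"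

lemma defines_family_cong:
  assumes "defines_family d \<phi> A" and "\<And>xs. length xs = d \<Longrightarrow> A xs = B xs"
  shows "defines_family d \<phi> B"
  using assms unfolding defines_family_def by simp

lemma defines_family_Neg:
  "defines_family d \<phi> A \<Longrightarrow> defines_family d (Neg \<phi>) (\<lambda>xs. - A xs)"
  unfolding defines_family_def by simp

lemma defines_family_quantifiers:
  assumes "defines_family (Suc d) \<psi> A"
  shows "defines_family d (FEx d \<psi>) (\<lambda>xs. \<Union>k. A (xs @ [k]))"
    and "defines_family d (FAll d \<psi>) (\<lambda>xs. \<Inter>k. A (xs @ [k]))"
proof -
  have params: "map (e(d := k)) [0..<Suc d] = map e [0..<d] @ [k]" for e :: "nat \<Rightarrow> nat" and k
    by simp
  have "freevars \<psi> - {d} \<subseteq> {..<d}"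
    using assms unfolding defines_family_def by auto
  with assms show "defines_family d (FEx d \<psi>) (\<lambda>xs. \<Union>k. A (xs @ [k]))"
    and "defines_family d (FAll d \<psi>) (\<lambda>xs. \<Inter>k. A (xs @ [k]))"
    unfolding defines_family_def by (simp_all add: params del: upt_Suc)
qed

text \<open>Every family of sets of the form "a given relation holds between the first d
  parameters and the prefix f(0), ..., f(x_d)" is defined by a single atomic formula
  G \<circ> f (x_0, ..., x_{d-1}, x_d) = 1, with G the characteristic function of the relation.\<close>

lemma prefix_family_definable:
  "\<exists>\<beta>. qfree \<beta> \<and> defines_family (Suc d) \<beta>
          (\<lambda>ys. {f. P (butlast ys) (map f [0..<Suc (last ys)])})"
proof -
  define \<beta> where "\<beta> = Eq (GF (\<lambda>xs s. if P xs s then 1 else 0) (map Var [0..<d]) (Var d)) (Cst 1)"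
  have "sat f e \<beta> \<longleftrightarrow> P (map e [0..<d]) (map f [0..<Suc (e d)])" for f e
    by (simp add: \<beta>_def comp_def del: upt_Suc)
  moreover have "freevars \<beta> \<subseteq> {..<Suc d}" and "qfree \<beta>"
    by (auto simp: \<beta>_def)
  moreover have "butlast (map e [0..<Suc d]) = map e [0..<d]" "last (map e [0..<Suc d]) = e d"
    for e :: "nat \<Rightarrow> nat" by simp_all
  ultimately show ?thesis
    by (intro exI[of _ \<beta>]) (simp add: defines_family_def del: upt_Suc)
qed

text \<open>A family of open sets is the union, over a new last parameter k, of a family defined by
  a quantifier-free formula: the cylinders of length k + 1 contained in the members.\<close>

lemma open_family_cylinder_formula:
  assumes "\<And>xs. length xs = d \<Longrightarrow> open (U xs)"
  shows "\<exists>\<beta> V. qfree \<beta> \<and> defines_family (Suc d) \<beta> V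
           \<and> (\<forall>xs. length xs = d \<longrightarrow> U xs = (\<Union>k. V (xs @ [k])))"
proof -
  define P where "P xs s \<longleftrightarrow> (\<forall>g. map g [0..<length s] = s \<longrightarrow> g \<in> U xs)" for xs s
  define V where "V ys = {f. P (butlast ys) (map f [0..<Suc (last ys)])}" for ys
  obtain \<beta> where "qfree \<beta>" "defines_family (Suc d) \<beta> V"
    using prefix_family_definable unfolding V_def by blast
  moreover have "U xs = (\<Union>k. V (xs @ [k]))" if "length xs = d" for xs
    using open_as_cylinder_union[OF assms[OF that]] by (simp add: P_def V_def del: upt_Suc)
  ultimately show ?thesis by blast
qed

text \<open>Level 1: open families are defined by \<Sigma>_1 formulas \<exists>k. \<beta>, closed families by \<Pi>_1
  formulas \<forall>k. \<not> \<beta> (the complement being open).\<close>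

lemma level_one_families_definable:
  shows "(\<forall>xs. length xs = d \<longrightarrow> A xs \<in> bSigma (Suc 0)) \<Longrightarrow> \<exists>\<phi>. isSigma (Suc 0) \<phi> \<and> defines_family d \<phi> A"
    and "(\<forall>xs. length xs = d \<longrightarrow> A xs \<in> bPi (Suc 0)) \<Longrightarrow> \<exists>\<phi>. isPi (Suc 0) \<phi> \<and> defines_family d \<phi> A"
proof -
  assume "\<forall>xs. length xs = d \<longrightarrow> A xs \<in> bSigma (Suc 0)"
  then obtain \<beta> V where \<beta>: "qfree \<beta>" "defines_family (Suc d) \<beta> V"
    and A: "\<forall>xs. length xs = d \<longrightarrow> A xs = (\<Union>k. V (xs @ [k]))"
    using open_family_cylinder_formula[of d A] by auto
  have "defines_family d (FEx d \<beta>) A"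
    by (rule defines_family_cong[OF defines_family_quantifiers(1)[OF \<beta>(2)]]) (simp add: A)
  moreover have "isSigma (Suc 0) (FEx d \<beta>)" using \<beta>(1) by simp
  ultimately show "\<exists>\<phi>. isSigma (Suc 0) \<phi> \<and> defines_family d \<phi> A" by blast
next
  assume "\<forall>xs. length xs = d \<longrightarrow> A xs \<in> bPi (Suc 0)"
  then obtain \<beta> V where \<beta>: "qfree \<beta>" "defines_family (Suc d) \<beta> V"
    and A: "\<forall>xs. length xs = d \<longrightarrow> - A xs = (\<Union>k. V (xs @ [k]))"
    using open_family_cylinder_formula[of d "\<lambda>xs. - A xs"] by (auto simp: bPi_def)
  have "defines_family d (FAll d (Neg \<beta>)) A"
    by (rule defines_family_cong[OF defines_family_quantifiers(2)[OF defines_family_Neg[OF \<beta>(2)]]])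
      (metis A Compl_UN double_compl)
  moreover have "isPi (Suc 0) (FAll d (Neg \<beta>))" using \<beta>(1) by simp
  ultimately show "\<exists>\<phi>. isPi (Suc 0) \<phi> \<and> defines_family d \<phi> A" by blast
qed

text \<open>In the inductive step the countably many pieces of each
  member are collected into one family with an extra parameter.\<close>

lemma Borel_families_definable:
  "((\<forall>xs. length xs = d \<longrightarrow> A xs \<in> bSigma (Suc n)) \<longrightarrow> (\<exists>\<phi>. isSigma (Suc n) \<phi> \<and> defines_family d \<phi> A))
   \<and> ((\<forall>xs. length xs = d \<longrightarrow> A xs \<in> bPi (Suc n)) \<longrightarrow> (\<exists>\<phi>. isPi (Suc n) \<phi> \<and> defines_family d \<phi> A))"
proof (induction n arbitrary: d A)
  case 0
  show ?case using level_one_families_definable by blast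
next
  case (Suc n)
  show ?case
  proof (intro conjI impI)
    assume "\<forall>xs. length xs = d \<longrightarrow> A xs \<in> bSigma (Suc (Suc n))"
    hence "\<forall>xs. \<exists>B. length xs = d \<longrightarrow> (\<forall>i::nat. B i \<in> bPi (Suc n)) \<and> A xs = (\<Union>i. B i)"
      unfolding bSigma_SucSuc_iff by blast
    from choice[OF this] obtain B
      where B: "\<forall>xs. length xs = d \<longrightarrow> (\<forall>i::nat. B xs i \<in> bPi (Suc n)) \<and> A xs = (\<Union>i. B xs i)"
      by blast
    have "\<forall>ys. length ys = Suc d \<longrightarrow> B (butlast ys) (last ys) \<in> bPi (Suc n)"
      using B by simp
    then obtain \<psi> where \<psi>: "isPi (Suc n) \<psi>" "defines_family (Suc d) \<psi> (\<lambda>ys. B (butlast ys) (last ys))"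
      using Suc.IH[of "Suc d" "\<lambda>ys. B (butlast ys) (last ys)"] by blast
    have "defines_family d (FEx d \<psi>) A"
      by (rule defines_family_cong[OF defines_family_quantifiers(1)[OF \<psi>(2)]]) (simp add: B)
    moreover have "isSigma (Suc (Suc n)) (FEx d \<psi>)" using \<psi>(1) by simp
    ultimately show "\<exists>\<phi>. isSigma (Suc (Suc n)) \<phi> \<and> defines_family d \<phi> A" by blast
  next
    assume "\<forall>xs. length xs = d \<longrightarrow> A xs \<in> bPi (Suc (Suc n))"
    hence "\<forall>xs. \<exists>C. length xs = d \<longrightarrow> (\<forall>i::nat. C i \<in> bSigma (Suc n)) \<and> A xs = (\<Inter>i. C i)"
      unfolding bPi_SucSuc_iff by blast
    from choice[OF this] obtain C
      where C: "\<forall>xs. length xs = d \<longrightarrow> (\<forall>i::nat. C xs i \<in> bSigma (Suc n)) \<and> A xs = (\<Inter>i. C xs i)"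
      by blast
    have "\<forall>ys. length ys = Suc d \<longrightarrow> C (butlast ys) (last ys) \<in> bSigma (Suc n)"
      using C by simp
    then obtain \<psi> where \<psi>: "isSigma (Suc n) \<psi>" "defines_family (Suc d) \<psi> (\<lambda>ys. C (butlast ys) (last ys))"
      using Suc.IH[of "Suc d" "\<lambda>ys. C (butlast ys) (last ys)"] by blast
    have "defines_family d (FAll d \<psi>) A"
      by (rule defines_family_cong[OF defines_family_quantifiers(2)[OF \<psi>(2)]]) (simp add: C)
    moreover have "isPi (Suc (Suc n)) (FAll d \<psi>)" using \<psi>(1) by simp
    ultimately show "\<exists>\<phi>. isPi (Suc (Suc n)) \<phi> \<and> defines_family d \<phi> A" by blast
  qed
qed

lemma defines_family_sentence:
  "defines_family 0 \<phi> (\<lambda>_. S) \<Longrightarrow> sentence \<phi> \<and> S = {f. models f \<phi>}"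
  unfolding defines_family_def sentence_def models_def by auto

lemma Sigma_sentences_iff:
  "S \<in> bSigma (Suc m) \<longleftrightarrow> (\<exists>\<phi>. sentence \<phi> \<and> isSigma (Suc m) \<phi> \<and> S = {f. models f \<phi>})"
proof
  assume "S \<in> bSigma (Suc m)"
  then obtain \<phi> where "isSigma (Suc m) \<phi>" "defines_family 0 \<phi> (\<lambda>_. S)"
    using Borel_families_definable[of 0 "\<lambda>_. S" m] by auto
  thus "\<exists>\<phi>. sentence \<phi> \<and> isSigma (Suc m) \<phi> \<and> S = {f. models f \<phi>}"
    using defines_family_sentence by blast
next
  assume "\<exists>\<phi>. sentence \<phi> \<and> isSigma (Suc m) \<phi> \<and> S = {f. models f \<phi>}"
  then obtain \<phi> where "sentence \<phi>" "isSigma (Suc m) \<phi>" "S = {f. models f \<phi>}" by blast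
  thus "S \<in> bSigma (Suc m)"
    using models_sentence[of \<phi> "\<lambda>_. 0"] formula_sets_Borel[of m \<phi> "\<lambda>_. 0"] by simp
qed

lemma Pi_sentences_iff:
  "S \<in> bPi (Suc m) \<longleftrightarrow> (\<exists>\<phi>. sentence \<phi> \<and> isPi (Suc m) \<phi> \<and> S = {f. models f \<phi>})"
proof
  assume "S \<in> bPi (Suc m)"
  then obtain \<phi> where "isPi (Suc m) \<phi>" "defines_family 0 \<phi> (\<lambda>_. S)"
    using Borel_families_definable[of 0 "\<lambda>_. S" m] by auto
  thus "\<exists>\<phi>. sentence \<phi> \<and> isPi (Suc m) \<phi> \<and> S = {f. models f \<phi>}"
    using defines_family_sentence by blast
next
  assume "\<exists>\<phi>. sentence \<phi> \<and> isPi (Suc m) \<phi> \<and> S = {f. models f \<phi>}"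
  then obtain \<phi> where "sentence \<phi>" "isPi (Suc m) \<phi>" "S = {f. models f \<phi>}" by blast
  thus "S \<in> bPi (Suc m)"
    using models_sentence[of \<phi> "\<lambda>_. 0"] formula_sets_Borel[of m \<phi> "\<lambda>_. 0"] by simp
qed

lemma Delta_sentences_iff:
  "S \<in> bDelta (Suc m) \<longleftrightarrow> (\<exists>\<phi>. sentence \<phi> \<and> isDelta (Suc m) \<phi> \<and> S = {f. models f \<phi>})"
proof
  assume "S \<in> bDelta (Suc m)"
  then obtain \<phi> \<psi> where \<phi>: "isSigma (Suc m) \<phi>" "defines_family 0 \<phi> (\<lambda>_. S)"
    and \<psi>: "isPi (Suc m) \<psi>" "defines_family 0 \<psi> (\<lambda>_. S)"
    using Borel_families_definable[of 0 "\<lambda>_. S" m] by (auto simp: bDelta_def)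
  have "equivalent \<phi> \<phi>" "equivalent \<phi> \<psi>"
    using \<phi>(2) \<psi>(2) by (simp_all add: equivalent_def defines_family_def)
  hence "isDelta (Suc m) \<phi>" using \<phi>(1) \<psi>(1) unfolding isDelta.simps by blast
  thus "\<exists>\<phi>. sentence \<phi> \<and> isDelta (Suc m) \<phi> \<and> S = {f. models f \<phi>}"
    using defines_family_sentence[OF \<phi>(2)] by blast
next
  assume "\<exists>\<phi>. sentence \<phi> \<and> isDelta (Suc m) \<phi> \<and> S = {f. models f \<phi>}"
  then obtain \<phi> \<psi>\<^sub>1 \<psi>\<^sub>2 where \<phi>: "sentence \<phi>" "S = {f. models f \<phi>}"
    and \<psi>: "isSigma (Suc m) \<psi>\<^sub>1" "equivalent \<phi> \<psi>\<^sub>1" "isPi (Suc m) \<psi>\<^sub>2" "equivalent \<phi> \<psi>\<^sub>2"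
    unfolding isDelta.simps by blast
  have "S = {f. sat f (\<lambda>_. 0) \<psi>\<^sub>1}" "S = {f. sat f (\<lambda>_. 0) \<psi>\<^sub>2}"
    using \<phi> \<psi>(2,4) models_sentence[of \<phi> "\<lambda>_. 0"] by (simp_all add: equivalent_def)
  moreover have "{f. sat f (\<lambda>_. 0) \<psi>\<^sub>1} \<in> bSigma (Suc m)" "{f. sat f (\<lambda>_. 0) \<psi>\<^sub>2} \<in> bPi (Suc m)"
    using \<psi>(1,3) formula_sets_Borel by blast+
  ultimately show "S \<in> bDelta (Suc m)" by (simp add: bDelta_def)
qed

theorem mainTheorem9:
  fixes S :: "(nat \<Rightarrow> nat) set" and n :: nat
  assumes "n > 0"
  shows "(S \<in> bSigma n \<longleftrightarrow> (\<exists>\<phi>. sentence \<phi> \<and> isSigma n \<phi> \<and> S = {f. models f \<phi>}))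
       \<and> (S \<in> bPi n \<longleftrightarrow> (\<exists>\<phi>. sentence \<phi> \<and> isPi n \<phi> \<and> S = {f. models f \<phi>}))
       \<and> (S \<in> bDelta n \<longleftrightarrow> (\<exists>\<phi>. sentence \<phi> \<and> isDelta n \<phi> \<and> S = {f. models f \<phi>}))"
proof -
  obtain m where "n = Suc m" using assms gr0_implies_Suc by blast
  thus ?thesis using Sigma_sentences_iff Pi_sentences_iff Delta_sentences_iff by simp
qed

end
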